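(* Let $f\colon X\to X$ be a homeomorphism of a metric space $X$. Every isolated set $\Lambda$ of $f$ admits a (discrete) catenary pseudo-metric.
   Context: An $f$-invariant set $\Lambda$ is isolated if there is a compact neighborhood $N$ of $\Lambda$ (an isolating neighborhood) such that $f^n(x)\in N$ for all $n\in\mathbb{Z}$ implies $x\in\Lambda$. For $\mathrm d\colon N\times N\to\mathbb{R}$, set $\ddot{\mathrm d}(x,y)=\mathrm d(f(x),f(y))-2\mathrm d(x,y)+\mathrm d(f^{-1}(x),f^{-1}(y))$ whenever all these points lie in $N$. A catenary pseudo-metric for $\Lambda$ is a continuous pseudo-metric $\mathrm d\colon N\times N\to\mathbb{R}$, with $N$ an isolating neighborhood of $\Lambda$, such that $\ddot{\mathrm d}=\mathrm d$ wherever defined, and $\mathrm d(x,y)=0$ if and only if $x=y$ or $x,y\in\Lambda$. *)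

theory Defs
  imports "HOL-Analysis.Analysis"
begin

definition zit :: "('a \<Rightarrow> 'a) \<Rightarrow> ('a \<Rightarrow> 'a) \<Rightarrow> int \<Rightarrow> 'a \<Rightarrow> 'a" where
  "zit f g n = (if 0 \<le> n then f ^^ nat n else g ^^ nat (- n))"

definition isolating_nbhd :: "('a::metric_space \<Rightarrow> 'a) \<Rightarrow> ('a \<Rightarrow> 'a) \<Rightarrow> 'a set \<Rightarrow> 'a set \<Rightarrow> bool" where
  "isolating_nbhd f g \<Lambda> N \<longleftrightarrow> compact N \<and> \<Lambda> \<subseteq> interior N \<and>
     (\<forall>x. (\<forall>n::int. zit f g n x \<in> N) \<longrightarrow> x \<in> \<Lambda>)"

definition isolated_set :: "('a::metric_space \<Rightarrow> 'a) \<Rightarrow> ('a \<Rightarrow> 'a) \<Rightarrow> 'a set \<Rightarrow> bool" where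
  "isolated_set f g \<Lambda> \<longleftrightarrow> f ` \<Lambda> = \<Lambda> \<and> (\<exists>N. isolating_nbhd f g \<Lambda> N)"

text \<open>Continuous pseudo-metric on N (values outside N \<times> N are irrelevant).\<close>
definition pseudo_metric_on :: "'a::metric_space set \<Rightarrow> ('a \<Rightarrow> 'a \<Rightarrow> real) \<Rightarrow> bool" where
  "pseudo_metric_on N d \<longleftrightarrow>
     (\<forall>x\<in>N. d x x = 0) \<and> (\<forall>x\<in>N. \<forall>y\<in>N. d x y = d y x) \<and>
     (\<forall>x\<in>N. \<forall>y\<in>N. \<forall>z\<in>N. d x z \<le> d x y + d y z)"

definition catenary_pseudo_metric ::
  "('a::metric_space \<Rightarrow> 'a) \<Rightarrow> ('a \<Rightarrow> 'a) \<Rightarrow> 'a set \<Rightarrow> 'a set \<Rightarrow> ('a \<Rightarrow> 'a \<Rightarrow> real) \<Rightarrow> bool" where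
  "catenary_pseudo_metric f g \<Lambda> N d \<longleftrightarrow>
     isolating_nbhd f g \<Lambda> N \<and>
     continuous_on (N \<times> N) (\<lambda>(x, y). d x y) \<and>
     pseudo_metric_on N d \<and>
     (\<forall>x\<in>N. \<forall>y\<in>N. f x \<in> N \<longrightarrow> f y \<in> N \<longrightarrow> g x \<in> N \<longrightarrow> g y \<in> N \<longrightarrow>
        d (f x) (f y) - 2 * d x y + d (g x) (g y) = d x y) \<and>
     (\<forall>x\<in>N. \<forall>y\<in>N. d x y = 0 \<longleftrightarrow> x = y \<or> (x \<in> \<Lambda> \<and> y \<in> \<Lambda>))"

end

theory Submission
  imports Defs
begin

text \<open>Let \<open>h\<close> be a bounded continuous pseudo-metric that vanishes exactly on \<open>N \<times> N\<close> and the
  diagonal, and put \<open>D\<^sub>F(x,y) = \<Sum>\<^sub>n q\<^sup>n h(F\<^sup>n x, F\<^sup>n y)\<close> for \<open>0 < q < 1\<close>. Then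
  \<open>D\<^sub>F(x,y) = h(x,y) + q D\<^sub>F(Fx,Fy)\<close>, so on points of \<open>N\<close> whose images stay in \<open>N\<close> the pseudo-metric
  \<open>D\<^sub>f\<close> is multiplied by \<open>1/q\<close> under \<open>f\<close> and \<open>D\<^sub>g\<close> by \<open>q\<close>, and conversely under \<open>g = f\<^sup>-\<^sup>1\<close>.
  Hence \<open>d = D\<^sub>f + D\<^sub>g\<close> satisfies \<open>d(fx,fy) + d(gx,gy) = (q + 1/q) d(x,y)\<close>, which is the catenary
  equation for \<open>q + 1/q = 3\<close>. Moreover \<open>d(x,y) = 0\<close> iff \<open>x = y\<close> or both full orbits stay in \<open>N\<close>,
  i.e. both points lie in the isolated set.\<close>

definition off_set_dist :: "'a::metric_space set \<Rightarrow> 'a \<Rightarrow> 'a \<Rightarrow> real" where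
  "off_set_dist N a b = min 1 (min (dist a b) (infdist a N + infdist b N))"

lemma off_set_dist_nonneg: "0 \<le> off_set_dist N a b"
  unfolding off_set_dist_def by (simp add: infdist_nonneg)

lemma off_set_dist_le_1: "off_set_dist N a b \<le> 1"
  unfolding off_set_dist_def by simp

lemma off_set_dist_self [simp]: "off_set_dist N a a = 0"
  unfolding off_set_dist_def by (simp add: infdist_nonneg)

lemma off_set_dist_commute: "off_set_dist N a b = off_set_dist N b a"
  unfolding off_set_dist_def by (simp add: dist_commute add.commute)

lemma off_set_dist_in [simp]: "a \<in> N \<Longrightarrow> b \<in> N \<Longrightarrow> off_set_dist N a b = 0"
  unfolding off_set_dist_def by simp

lemma off_set_dist_triangle: "off_set_dist N a c \<le> off_set_dist N a b + off_set_dist N b c"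
proof -
  have "infdist a N \<le> dist a b + infdist b N" "infdist c N \<le> dist b c + infdist b N"
    using infdist_triangle[of a N b] infdist_triangle[of c N b] by (simp_all add: dist_commute)
  moreover have "dist a c \<le> dist a b + dist b c"
    by (rule dist_triangle)
  moreover have nonneg: "0 \<le> infdist a N" "0 \<le> infdist b N" "0 \<le> infdist c N"
    by (simp_all add: infdist_nonneg)
  moreover have "0 \<le> dist a b" "0 \<le> dist b c"
    by simp_all
  ultimately have inner: "min (dist a c) (infdist a N + infdist c N) \<le>
      min (dist a b) (infdist a N + infdist b N) + min (dist b c) (infdist b N + infdist c N)"
    unfolding min_def by (auto split: if_splits)
  have "min 1 u \<le> min 1 v + min 1 w" if "u \<le> v + w" "0 \<le> v" "0 \<le> w" for u v w :: real
    using that by (simp add: min_def)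
  from this[OF inner] show ?thesis
    unfolding off_set_dist_def using nonneg by simp
qed

lemma off_set_dist_pos:
  assumes "closed N" "N \<noteq> {}" "a \<notin> N \<or> b \<notin> N" "a \<noteq> b"
  shows "0 < off_set_dist N a b"
proof -
  have "0 < infdist a N \<or> 0 < infdist b N"
    using assms in_closed_iff_infdist_zero infdist_nonneg by (metis order_le_less)
  then show ?thesis
    unfolding off_set_dist_def using assms(4) infdist_nonneg[of a N] infdist_nonneg[of b N] by auto
qed

definition orbit_dist :: "real \<Rightarrow> 'a::metric_space set \<Rightarrow> ('a \<Rightarrow> 'a) \<Rightarrow> 'a \<Rightarrow> 'a \<Rightarrow> real" where
  "orbit_dist q N F x y = (\<Sum>n. q ^ n * off_set_dist N ((F ^^ n) x) ((F ^^ n) y))"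

lemma norm_orbit_dist_term_le:
  "0 \<le> q \<Longrightarrow> norm (q ^ n * off_set_dist N a b) \<le> q ^ n"
  using off_set_dist_nonneg[of N a b] off_set_dist_le_1[of N a b]
  by (simp add: mult_left_le)

lemma summable_orbit_dist:
  assumes "0 \<le> q" "q < 1"
  shows "summable (\<lambda>n. q ^ n * off_set_dist N ((F ^^ n) x) ((F ^^ n) y))"
  by (rule summable_comparison_test[of _ "\<lambda>n. q ^ n"])
    (use assms norm_orbit_dist_term_le in \<open>blast, simp add: summable_geometric\<close>)

lemma orbit_dist_nonneg: "0 \<le> q \<Longrightarrow> q < 1 \<Longrightarrow> 0 \<le> orbit_dist q N F x y"
  unfolding orbit_dist_def
  by (intro suminf_nonneg summable_orbit_dist mult_nonneg_nonneg zero_le_power off_set_dist_nonneg)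

lemma orbit_dist_self [simp]: "orbit_dist q N F x x = 0"
  unfolding orbit_dist_def by simp

lemma orbit_dist_commute: "orbit_dist q N F x y = orbit_dist q N F y x"
  unfolding orbit_dist_def by (simp add: off_set_dist_commute)

lemma orbit_dist_triangle:
  assumes "0 \<le> q" "q < 1"
  shows "orbit_dist q N F x z \<le> orbit_dist q N F x y + orbit_dist q N F y z"
proof -
  note summ = summable_orbit_dist[OF assms]
  have "orbit_dist q N F x z \<le>
      (\<Sum>n. q ^ n * off_set_dist N ((F ^^ n) x) ((F ^^ n) y) + q ^ n * off_set_dist N ((F ^^ n) y) ((F ^^ n) z))"
    unfolding orbit_dist_def
    by (intro suminf_le summ summable_add)
      (use assms in \<open>auto simp: distrib_left[symmetric] intro!: mult_left_mono off_set_dist_triangle\<close>)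
  also have "\<dots> = orbit_dist q N F x y + orbit_dist q N F y z"
    unfolding orbit_dist_def by (rule suminf_add[OF summ summ, symmetric])
  finally show ?thesis .
qed

lemma orbit_dist_unfold:
  assumes "0 \<le> q" "q < 1"
  shows "orbit_dist q N F x y = off_set_dist N x y + q * orbit_dist q N F (F x) (F y)"
proof -
  note summ = summable_orbit_dist[OF assms]
  have "orbit_dist q N F x y =
      off_set_dist N x y + (\<Sum>n. q ^ Suc n * off_set_dist N ((F ^^ Suc n) x) ((F ^^ Suc n) y))"
    unfolding orbit_dist_def using suminf_split_head[OF summ[of N F x y]] by simp
  also have "(\<Sum>n. q ^ Suc n * off_set_dist N ((F ^^ Suc n) x) ((F ^^ Suc n) y)) =
      (\<Sum>n. q * (q ^ n * off_set_dist N ((F ^^ n) (F x)) ((F ^^ n) (F y))))"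
    by (simp add: funpow_swap1 mult.assoc)
  also have "\<dots> = q * orbit_dist q N F (F x) (F y)"
    unfolding orbit_dist_def by (rule suminf_mult[OF summ])
  finally show ?thesis .
qed

lemma continuous_on_orbit_dist:
  assumes "0 \<le> q" "q < 1" "continuous_on UNIV F"
  shows "continuous_on S (\<lambda>(x, y). orbit_dist q N F x y)"
proof -
  have cont_iter: "continuous_on UNIV (F ^^ n)" for n
    by (induction n) (auto intro: continuous_on_compose[OF _ continuous_on_subset[OF assms(3)], unfolded o_def])
  have cont_term: "continuous_on S (\<lambda>p. q ^ i * off_set_dist N ((F ^^ i) (fst p)) ((F ^^ i) (snd p)))" for i
    unfolding off_set_dist_def by (intro continuous_intros continuous_on_compose2[OF cont_iter]) auto
  have "uniform_limit S (\<lambda>n p. \<Sum>i<n. q ^ i * off_set_dist N ((F ^^ i) (fst p)) ((F ^^ i) (snd p)))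
      (\<lambda>p. \<Sum>i. q ^ i * off_set_dist N ((F ^^ i) (fst p)) ((F ^^ i) (snd p))) sequentially"
    by (rule Weierstrass_m_test[where M = "\<lambda>i. q ^ i"])
      (use assms norm_orbit_dist_term_le in \<open>auto simp: summable_geometric\<close>)
  then have "continuous_on S (\<lambda>p. \<Sum>i. q ^ i * off_set_dist N ((F ^^ i) (fst p)) ((F ^^ i) (snd p)))"
    by (rule uniform_limit_theorem[rotated]) (auto intro!: always_eventually continuous_on_sum cont_term)
  then show ?thesis
    unfolding orbit_dist_def by (simp add: case_prod_beta')
qed

lemma orbit_dist_eq_0_iff:
  assumes "closed N" "N \<noteq> {}" "inj F" "0 < q" "q < 1"
  shows "orbit_dist q N F x y = 0 \<longleftrightarrow> x = y \<or> (\<forall>n. (F ^^ n) x \<in> N \<and> (F ^^ n) y \<in> N)"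
proof
  assume "x = y \<or> (\<forall>n. (F ^^ n) x \<in> N \<and> (F ^^ n) y \<in> N)"
  then show "orbit_dist q N F x y = 0"
    unfolding orbit_dist_def by auto
next
  assume zero: "orbit_dist q N F x y = 0"
  show "x = y \<or> (\<forall>n. (F ^^ n) x \<in> N \<and> (F ^^ n) y \<in> N)"
  proof (rule ccontr)
    assume "\<not> ?thesis"
    then obtain k where "x \<noteq> y" "(F ^^ k) x \<notin> N \<or> (F ^^ k) y \<notin> N"
      by blast
    moreover have "inj (F ^^ k)"
      using assms(3) by simp
    ultimately have "0 < off_set_dist N ((F ^^ k) x) ((F ^^ k) y)"
      using off_set_dist_pos[OF assms(1,2)] by (meson injD)
    then have "0 < orbit_dist q N F x y"
      unfolding orbit_dist_def using assms(4,5)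
      by (intro suminf_pos2[where i = k] summable_orbit_dist)
        (auto intro!: mult_nonneg_nonneg off_set_dist_nonneg)
    with zero show False by simp
  qed
qed

lemma orbit_dist_sum_catenary:
  assumes "0 < q" "q < 1" "q + 1 / q = 3" "\<And>x. g (f x) = x" "\<And>x. f (g x) = x"
    and "x \<in> N" "y \<in> N" "f x \<in> N" "f y \<in> N" "g x \<in> N" "g y \<in> N"
  defines "d \<equiv> \<lambda>x y. orbit_dist q N f x y + orbit_dist q N g x y"
  shows "d (f x) (f y) - 2 * d x y + d (g x) (g y) = d x y"
proof -
  note unfold = orbit_dist_unfold[of q N, OF less_imp_le[OF assms(1)] assms(2)]
  have "orbit_dist q N f x y = q * orbit_dist q N f (f x) (f y)"
    "orbit_dist q N g x y = q * orbit_dist q N g (g x) (g y)"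
    "orbit_dist q N f (g x) (g y) = q * orbit_dist q N f x y"
    "orbit_dist q N g (f x) (f y) = q * orbit_dist q N g x y"
    using unfold[of f x y] unfold[of g x y] unfold[of f "g x" "g y"] unfold[of g "f x" "f y"] assms(4-11)
    by simp_all
  then have "d (f x) (f y) + d (g x) (g y) = (q + 1 / q) * d x y"
    unfolding d_def using assms(1) by (simp add: field_simps)
  then show ?thesis
    using assms(3) by simp
qed

definition catenary_ratio :: real where
  "catenary_ratio = (3 - sqrt 5) / 2"

lemma catenary_ratio_bounds: "0 < catenary_ratio" "catenary_ratio < 1"
proof -
  have "1 < sqrt 5" "sqrt 5 < 3"
    using real_sqrt_less_iff[of 1 5] real_sqrt_less_iff[of 5 9] by simp_all
  then show "0 < catenary_ratio" "catenary_ratio < 1"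
    unfolding catenary_ratio_def by auto
qed

lemma catenary_ratio_add_inverse: "catenary_ratio + 1 / catenary_ratio = 3"
proof -
  have "catenary_ratio * catenary_ratio = 3 * catenary_ratio - 1"
    unfolding catenary_ratio_def by (simp add: field_simps)
  then show ?thesis
    using catenary_ratio_bounds(1) by (simp add: field_simps)
qed

lemma zit_orbit_subset_iff:
  "(\<forall>n. zit f g n x \<in> N) \<longleftrightarrow> (\<forall>n. (f ^^ n) x \<in> N) \<and> (\<forall>n. (g ^^ n) x \<in> N)"
proof
  assume orbit: "\<forall>n. zit f g n x \<in> N"
  have "(f ^^ n) x \<in> N" for n
    using orbit[rule_format, of "int n"] by (simp add: zit_def)
  moreover have "(g ^^ n) x \<in> N" for n
    using orbit[rule_format, of "- int n"] by (cases "n = 0") (simp_all add: zit_def)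
  ultimately show "(\<forall>n. (f ^^ n) x \<in> N) \<and> (\<forall>n. (g ^^ n) x \<in> N)"
    by blast
qed (simp add: zit_def)

lemma funpow_mem_invariant: "F ` L = L \<Longrightarrow> x \<in> L \<Longrightarrow> (F ^^ n) x \<in> L"
  by (induction n) auto

lemma mem_isolated_set_iff_orbits:
  assumes "isolating_nbhd f g \<Lambda> N" "f ` \<Lambda> = \<Lambda>" "\<And>x. g (f x) = x"
  shows "x \<in> \<Lambda> \<longleftrightarrow> (\<forall>n. (f ^^ n) x \<in> N) \<and> (\<forall>n. (g ^^ n) x \<in> N)"
proof -
  have "g ` \<Lambda> = g ` f ` \<Lambda>"
    using assms(2) by simp
  also have "\<dots> = \<Lambda>"
    by (simp add: image_image assms(3))
  finally have "g ` \<Lambda> = \<Lambda>" .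
  moreover have "\<Lambda> \<subseteq> N" "(\<forall>n. zit f g n x \<in> N) \<longrightarrow> x \<in> \<Lambda>"
    using assms(1) interior_subset unfolding isolating_nbhd_def by blast+
  ultimately show ?thesis
    using funpow_mem_invariant[OF assms(2)] funpow_mem_invariant[of g \<Lambda>]
    unfolding zit_orbit_subset_iff by blast
qed

theorem mainTheorem16:
  fixes f g :: "'a::metric_space \<Rightarrow> 'a" and \<Lambda> :: "'a set"
  assumes "homeomorphism UNIV UNIV f g"
    and "isolated_set f g \<Lambda>"
  shows "\<exists>N d. catenary_pseudo_metric f g \<Lambda> N d"
proof -
  have gf: "\<And>x. g (f x) = x" and fg: "\<And>x. f (g x) = x"
    and cont: "continuous_on UNIV f" "continuous_on UNIV g"
    using assms(1) unfolding homeomorphism_def by auto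
  have inj: "inj f" "inj g"
    by (metis gf injI, metis fg injI)
  obtain N where iso: "isolating_nbhd f g \<Lambda> N" and inv: "f ` \<Lambda> = \<Lambda>"
    using assms(2) unfolding isolated_set_def by blast
  have "closed N"
    using iso unfolding isolating_nbhd_def by (auto intro: compact_imp_closed)
  note q = catenary_ratio_bounds catenary_ratio_add_inverse
  define d where "d x y = orbit_dist catenary_ratio N f x y + orbit_dist catenary_ratio N g x y" for x y
  have "continuous_on (N \<times> N) (\<lambda>(x, y). d x y)"
    unfolding d_def case_prod_beta'
    by (intro continuous_on_add continuous_on_orbit_dist[unfolded case_prod_beta'] q cont less_imp_le)
  moreover have "pseudo_metric_on N d"
    unfolding pseudo_metric_on_def d_def
    using orbit_dist_commute orbit_dist_triangle q(1,2) by (smt (verit) orbit_dist_self)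
  moreover have "d x y = 0 \<longleftrightarrow> x = y \<or> (x \<in> \<Lambda> \<and> y \<in> \<Lambda>)" if "x \<in> N" "y \<in> N" for x y
  proof -
    have "d x y = 0 \<longleftrightarrow> orbit_dist catenary_ratio N f x y = 0 \<and> orbit_dist catenary_ratio N g x y = 0"
      unfolding d_def using q(1,2) by (intro add_nonneg_eq_0_iff orbit_dist_nonneg) simp_all
    also have "\<dots> \<longleftrightarrow> x = y \<or> (\<forall>n. (f ^^ n) x \<in> N \<and> (f ^^ n) y \<in> N) \<and> (\<forall>n. (g ^^ n) x \<in> N \<and> (g ^^ n) y \<in> N)"
      using orbit_dist_eq_0_iff[OF \<open>closed N\<close> _ _ q(1,2)] inj that by auto
    also have "\<dots> \<longleftrightarrow> x = y \<or> (x \<in> \<Lambda> \<and> y \<in> \<Lambda>)"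
      using mem_isolated_set_iff_orbits[OF iso inv gf] by blast
    finally show ?thesis .
  qed
  ultimately have "catenary_pseudo_metric f g \<Lambda> N d"
    unfolding catenary_pseudo_metric_def d_def
    using iso orbit_dist_sum_catenary[OF q(1,2,3) gf fg] by blast
  then show ?thesis by blast
qed

end
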